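(* Let $(S,\ast)$ be an adequate commutative partial semigroup and let $A$ be a $J_\delta$-set in $S$. Let $F\in\mathcal{P}_f(\mathcal{T}_S)$ and let $\langle H_n\rangle_{n=1}^\infty$ be a sequence in $\mathcal{P}_f(\mathbb{N})$ such that $\max H_n<\min H_{n+1}$ for each $n$. Then for every $W\in\mathcal{P}_f(S)$ there exist $a\in\sigma_S(W)$ and $G\in\mathcal{P}_f(\mathbb{N})$ such that for all $f\in F$, $\prod_{k\in G}\prod_{t\in H_k}f(t)\in\sigma_S(W\ast a)$ and $a\ast\prod_{k\in G}\prod_{t\in H_k}f(t)\in A$.
   Context: A partial semigroup is a pair $(S,\ast)$ where $\ast$ is an operation defined on a subset of $S\times S$ such that for all $x,y,z\in S$, $(x\ast y)\ast z=x\ast(y\ast z)$ in the sense that if either side is defined, so is the other and they are equal; it is commutative if $x\ast y=y\ast x$ whenever defined. For $s\in S$, $\phi_S(s)=\{t\in S: s\ast t\text{ is defined}\}$; for $H\in\mathcal{P}_f(S)$ (finite nonempty subsets), $\sigma_S(H)=\bigcap_{s\in H}\phi_S(s)$. $(S,\ast)$ is adequate if $\sigma_S(H)\ne\emptyset$ for all $H\in\mathcal{P}_f(S)$. A sequence $\langle y_n\rangle$ in $S$ is adequate if $\prod_{n\in F}y_n$ is defined for every $F\in\mathcal{P}_f(\mathbb{N})$ and for every $K\in\mathcal{P}_f(S)$ there is $m$ with $\prod_{n\in F}y_n\in\sigma_S(K)$ for all $F\in\mathcal{P}_f(\mathbb{N})$ with $\min F\ge m$. $\mathcal{T}_S$ is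 the set of all adequate sequences in $S$. For $W\in\mathcal{P}_f(S)$ and $a\in S$, $W\ast a=\{w\ast a: w\in W,\ w\ast a\text{ defined}\}$. A set $A\subseteq S$ is a $J_\delta$-set if for every $F\in\mathcal{P}_f(\mathcal{T}_S)$ and $W\in\mathcal{P}_f(S)$ there exist $a\in\sigma_S(W)$ and $H\in\mathcal{P}_f(\mathbb{N})$ such that for each $f\in F$, $\prod_{t\in H}f(t)\in\sigma_S(W\ast a)$ and $a\ast\prod_{t\in H}f(t)\in A$. *)

theory Defs
  imports Main
begin

text \<open>A partial operation on the type 'a (which plays the role of S) is a function
  'a \<Rightarrow> 'a \<Rightarrow> 'a option; None means undefined.\<close>

definition partial_semigroup :: "('a \<Rightarrow> 'a \<Rightarrow> 'a option) \<Rightarrow> bool" where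
  "partial_semigroup op \<longleftrightarrow>
     (\<forall>x y z. Option.bind (op x y) (\<lambda>u. op u z) = Option.bind (op y z) (\<lambda>v. op x v))"

definition commutative_ps :: "('a \<Rightarrow> 'a \<Rightarrow> 'a option) \<Rightarrow> bool" where
  "commutative_ps op \<longleftrightarrow> (\<forall>x y. op x y = op y x)"

definition phiS :: "('a \<Rightarrow> 'a \<Rightarrow> 'a option) \<Rightarrow> 'a \<Rightarrow> 'a set" where
  "phiS op s = {t. op s t \<noteq> None}"

definition sigmaS :: "('a \<Rightarrow> 'a \<Rightarrow> 'a option) \<Rightarrow> 'a set \<Rightarrow> 'a set" where
  "sigmaS op H = (\<Inter>s\<in>H. phiS op s)"

definition adequate_ps :: "('a \<Rightarrow> 'a \<Rightarrow> 'a option) \<Rightarrow> bool" where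
  "adequate_ps op \<longleftrightarrow> (\<forall>H. finite H \<and> H \<noteq> {} \<longrightarrow> sigmaS op H \<noteq> {})"

fun plist :: "('a \<Rightarrow> 'a \<Rightarrow> 'a option) \<Rightarrow> 'a list \<Rightarrow> 'a option" where
  "plist op [] = None"
| "plist op [x] = Some x"
| "plist op (x # y # xs) = Option.bind (plist op (y # xs)) (\<lambda>p. op x p)"

definition pprod :: "('a \<Rightarrow> 'a \<Rightarrow> 'a option) \<Rightarrow> nat set \<Rightarrow> (nat \<Rightarrow> 'a) \<Rightarrow> 'a option" where
  "pprod op F y = plist op (map y (sorted_list_of_set F))"

definition adequate_seq :: "('a \<Rightarrow> 'a \<Rightarrow> 'a option) \<Rightarrow> (nat \<Rightarrow> 'a) \<Rightarrow> bool" where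
  "adequate_seq op y \<longleftrightarrow>
     (\<forall>F. finite F \<and> F \<noteq> {} \<longrightarrow> pprod op F y \<noteq> None) \<and>
     (\<forall>K. finite K \<and> K \<noteq> {} \<longrightarrow>
        (\<exists>m. \<forall>F. finite F \<and> F \<noteq> {} \<and> Min F \<ge> m \<longrightarrow>
           (\<exists>p. pprod op F y = Some p \<and> p \<in> sigmaS op K)))"

definition TS :: "('a \<Rightarrow> 'a \<Rightarrow> 'a option) \<Rightarrow> (nat \<Rightarrow> 'a) set" where
  "TS op = {y. adequate_seq op y}"

definition Wmul :: "('a \<Rightarrow> 'a \<Rightarrow> 'a option) \<Rightarrow> 'a set \<Rightarrow> 'a \<Rightarrow> 'a set" where
  "Wmul op W a = {c. \<exists>w\<in>W. op w a = Some c}"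

definition Jdelta :: "('a \<Rightarrow> 'a \<Rightarrow> 'a option) \<Rightarrow> 'a set \<Rightarrow> bool" where
  "Jdelta op A \<longleftrightarrow>
     (\<forall>F W. finite F \<and> F \<noteq> {} \<and> F \<subseteq> TS op \<and> finite W \<and> W \<noteq> {} \<longrightarrow>
        (\<exists>a\<in>sigmaS op W. \<exists>H. finite H \<and> H \<noteq> {} \<and>
           (\<forall>f\<in>F. \<exists>p. pprod op H f = Some p \<and> p \<in> sigmaS op (Wmul op W a) \<and>
                     (\<exists>c. op a p = Some c \<and> c \<in> A))))"

end

theory Submission
  imports Defs
begin

text \<open>For each f the block products g k = \<Prod>t\<in>H k. f t form again an adequate
  sequence: since the blocks H k lie in increasing order, associativity gives
  \<Prod>k\<in>G. g k = \<Prod>t\<in>\<Union>k\<in>G. H k. f t, and min H k \<ge> k, so products of g over index sets with large minimum are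
  products of f over index sets with large minimum.
  Applying the J\<delta> property to the finitely many sequences g proves the claim.\<close>

lemma plist_append:
  assumes "partial_semigroup op" and "xs \<noteq> []" and "ys \<noteq> []"
  shows "plist op (xs @ ys) =
    Option.bind (plist op xs) (\<lambda>p. Option.bind (plist op ys) (\<lambda>q. op p q))"
  using \<open>xs \<noteq> []\<close>
proof (induction xs rule: induct_list012)
  case (2 x)
  then show ?case using \<open>ys \<noteq> []\<close> by (cases ys) auto
next
  case (3 x y xs)
  have assoc: "Option.bind (op x p) (\<lambda>u. op u q) = Option.bind (op p q) (\<lambda>v. op x v)" for x p q
    using assms(1) unfolding partial_semigroup_def by simp
  show ?case
    using 3 assoc by (cases "plist op (y # xs)"; cases "plist op ys"; simp)
qed simp

lemma plist_concat:
  assumes "partial_semigroup op" and "Ls \<noteq> []"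
    and "\<forall>L\<in>set Ls. L \<noteq> [] \<and> plist op L \<noteq> None"
  shows "plist op (concat Ls) = plist op (map (\<lambda>L. the (plist op L)) Ls)"
  using assms(2,3)
proof (induction Ls rule: induct_list012)
  case (3 L L' Ls)
  have "plist op (concat (L # L' # Ls)) =
      Option.bind (plist op L) (\<lambda>p. Option.bind (plist op (concat (L' # Ls))) (\<lambda>q. op p q))"
    using plist_append[OF assms(1), of L "concat (L' # Ls)"] "3.prems" by simp
  also have "\<dots> = Option.bind (plist op L)
      (\<lambda>p. Option.bind (plist op (map (\<lambda>L. the (plist op L)) (L' # Ls))) (\<lambda>q. op p q))"
    using 3 by simp
  finally show ?case using "3.prems" by (cases "plist op L") auto
qed auto

definition increasing_blocks :: "(nat \<Rightarrow> nat set) \<Rightarrow> bool" where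
  "increasing_blocks H \<longleftrightarrow>
     (\<forall>n. finite (H n) \<and> H n \<noteq> {}) \<and> (\<forall>n. Max (H n) < Min (H (Suc n)))"

lemma increasing_blocks_Min_le_Max:
  "increasing_blocks H \<Longrightarrow> Min (H n) \<le> Max (H n)"
  unfolding increasing_blocks_def by (simp add: Max_ge Min_in)

lemma increasing_blocks_Max_less_Min:
  assumes "increasing_blocks H" and "i < j"
  shows "Max (H i) < Min (H j)"
  using \<open>i < j\<close>
proof (induction j)
  case (Suc j)
  have step: "Max (H j) < Min (H (Suc j))"
    using assms(1) unfolding increasing_blocks_def by blast
  show ?case
  proof (cases "i = j")
    case False
    then have "Max (H i) < Min (H j)" using Suc by simp
    then show ?thesis
      using step increasing_blocks_Min_le_Max[OF assms(1), of j] by linarith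
  qed (use step in simp)
qed simp

lemma increasing_blocks_less:
  assumes "increasing_blocks H" and "i < j" and "x \<in> H i" and "y \<in> H j"
  shows "x < y"
proof -
  have "x \<le> Max (H i)" and "Min (H j) \<le> y"
    using assms(1,3,4) unfolding increasing_blocks_def by simp_all
  then show ?thesis
    using increasing_blocks_Max_less_Min[OF assms(1,2)] by linarith
qed

lemma increasing_blocks_index_le_Min:
  assumes "increasing_blocks H"
  shows "n \<le> Min (H n)"
proof (induction n)
  case (Suc n)
  then show ?case
    using assms increasing_blocks_Min_le_Max[OF assms, of n]
    unfolding increasing_blocks_def by (metis Suc_leI le_less_trans order.trans)
qed simp

lemma sorted_list_of_set_UN_increasing_blocks:
  assumes "increasing_blocks H" and "finite G"
  shows "sorted_list_of_set (\<Union>k\<in>G. H k) =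
    concat (map (\<lambda>k. sorted_list_of_set (H k)) (sorted_list_of_set G))"
proof -
  have fin: "finite (H k)" for k
    using assms(1) unfolding increasing_blocks_def by simp
  have "sorted_wrt (<) (concat (map (\<lambda>k. sorted_list_of_set (H k)) ks))"
    if "sorted_wrt (<) ks" for ks
    using that
  proof (induction ks)
    case (Cons k ks)
    then show ?case
      using increasing_blocks_less[OF assms(1)]
      by (auto simp: sorted_wrt_append fin strict_sorted_list_of_set)
  qed simp
  then have "sorted_wrt (<) (concat (map (\<lambda>k. sorted_list_of_set (H k)) (sorted_list_of_set G)))"
    by simp
  then show ?thesis
    by (rule strict_sorted_equal[OF _ strict_sorted_list_of_set]) (simp add: assms(2) fin)
qed

lemma pprod_blocks_eq_pprod_UN:
  assumes "partial_semigroup op" and "increasing_blocks H"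
    and "\<forall>k. pprod op (H k) f \<noteq> None"
    and "finite G" and "G \<noteq> {}"
  shows "pprod op G (\<lambda>k. the (pprod op (H k) f)) = pprod op (\<Union>k\<in>G. H k) f"
proof -
  let ?blocks = "map (\<lambda>k. map f (sorted_list_of_set (H k))) (sorted_list_of_set G)"
  have "pprod op (\<Union>k\<in>G. H k) f = plist op (concat ?blocks)"
    unfolding pprod_def sorted_list_of_set_UN_increasing_blocks[OF assms(2,4)]
    by (simp add: map_concat comp_def)
  also have "\<dots> = plist op (map (\<lambda>L. the (plist op L)) ?blocks)"
    using assms unfolding increasing_blocks_def pprod_def
    by (intro plist_concat) auto
  also have "\<dots> = pprod op G (\<lambda>k. the (pprod op (H k) f))"
    unfolding pprod_def by (simp add: comp_def)
  finally show ?thesis by simp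
qed

lemma adequate_seq_blocks:
  assumes "partial_semigroup op" and "increasing_blocks H" and "adequate_seq op f"
  shows "adequate_seq op (\<lambda>k. the (pprod op (H k) f))"
proof -
  have UN_ne: "finite (\<Union>k\<in>G. H k) \<and> (\<Union>k\<in>G. H k) \<noteq> {}" if "finite G" "G \<noteq> {}" for G
    using that assms(2) unfolding increasing_blocks_def by auto
  have defined: "\<forall>F. finite F \<and> F \<noteq> {} \<longrightarrow> pprod op F f \<noteq> None"
    using assms(3) unfolding adequate_seq_def by (rule conjunct1)
  then have "\<forall>k. pprod op (H k) f \<noteq> None"
    using assms(2) unfolding increasing_blocks_def by simp
  note prod_UN = pprod_blocks_eq_pprod_UN[OF assms(1,2) this]
  have Min_UN: "Min G \<le> Min (\<Union>k\<in>G. H k)" if "finite G" "G \<noteq> {}" for G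
  proof -
    have "Min G \<le> x" if x: "x \<in> (\<Union>k\<in>G. H k)" for x
    proof -
      obtain k where "k \<in> G" "x \<in> H k" using x by blast
      then have "Min G \<le> k" and "Min (H k) \<le> x"
        using \<open>finite G\<close> assms(2) unfolding increasing_blocks_def by simp_all
      then show ?thesis
        using increasing_blocks_index_le_Min[OF assms(2), of k] by linarith
    qed
    then show ?thesis using UN_ne[OF that] by (simp add: Min_ge_iff)
  qed
  show ?thesis
    unfolding adequate_seq_def
  proof (intro conjI allI impI)
    fix G :: "nat set" assume "finite G \<and> G \<noteq> {}"
    then show "pprod op G (\<lambda>k. the (pprod op (H k) f)) \<noteq> None"
      using defined UN_ne[of G] by (simp add: prod_UN)
  next
    fix K :: "'a set" assume "finite K \<and> K \<noteq> {}"
    then obtain m where m: "\<forall>F. finite F \<and> F \<noteq> {} \<and> Min F \<ge> m \<longrightarrow>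
        (\<exists>p. pprod op F f = Some p \<and> p \<in> sigmaS op K)"
      using assms(3) unfolding adequate_seq_def by blast
    have "\<exists>p. pprod op G (\<lambda>k. the (pprod op (H k) f)) = Some p \<and> p \<in> sigmaS op K"
      if G: "finite G" "G \<noteq> {}" "Min G \<ge> m" for G
    proof -
      have "Min (\<Union>k\<in>G. H k) \<ge> m"
        using Min_UN[OF G(1,2)] G(3) by linarith
      then have "\<exists>p. pprod op (\<Union>k\<in>G. H k) f = Some p \<and> p \<in> sigmaS op K"
        using m UN_ne[OF G(1,2)] by blast
      then show ?thesis
        by (simp only: prod_UN[OF G(1,2)])
    qed
    then show "\<exists>m. \<forall>G. finite G \<and> G \<noteq> {} \<and> Min G \<ge> m \<longrightarrow>
        (\<exists>p. pprod op G (\<lambda>k. the (pprod op (H k) f)) = Some p \<and> p \<in> sigmaS op K)"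
      by blast
  qed
qed

theorem lemma3p2:
  fixes op :: "'a \<Rightarrow> 'a \<Rightarrow> 'a option" and A :: "'a set"
    and F :: "(nat \<Rightarrow> 'a) set" and H :: "nat \<Rightarrow> nat set"
  assumes "partial_semigroup op" and "commutative_ps op" and "adequate_ps op"
    and "Jdelta op A"
    and "finite F" and "F \<noteq> {}" and "F \<subseteq> TS op"
    and "\<forall>n. finite (H n) \<and> H n \<noteq> {}"
    and "\<forall>n. Max (H n) < Min (H (Suc n))"
  shows "\<forall>W. finite W \<and> W \<noteq> {} \<longrightarrow>
           (\<exists>a\<in>sigmaS op W. \<exists>G. finite G \<and> G \<noteq> {} \<and>
              (\<forall>f\<in>F. \<exists>p. pprod op G (\<lambda>k. the (pprod op (H k) f)) = Some p \<and>
                        p \<in> sigmaS op (Wmul op W a) \<and>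
                        (\<exists>c. op a p = Some c \<and> c \<in> A)))"
proof (intro allI impI)
  fix W :: "'a set" assume W: "finite W \<and> W \<noteq> {}"
  define blocks where "blocks f = (\<lambda>k. the (pprod op (H k) f))" for f :: "nat \<Rightarrow> 'a"
  have "increasing_blocks H"
    using assms(8,9) unfolding increasing_blocks_def by blast
  then have "blocks ` F \<subseteq> TS op"
    using assms(7) adequate_seq_blocks[OF assms(1)] unfolding blocks_def TS_def by auto
  then have "finite (blocks ` F) \<and> blocks ` F \<noteq> {} \<and> blocks ` F \<subseteq> TS op \<and> finite W \<and> W \<noteq> {}"
    using assms(5,6) W by simp
  from assms(4)[unfolded Jdelta_def, rule_format, OF this]
  obtain a G where "a \<in> sigmaS op W" "finite G" "G \<noteq> {}"
    and "\<forall>g\<in>blocks ` F. \<exists>p. pprod op G g = Some p \<and> p \<in> sigmaS op (Wmul op W a) \<and>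
                                 (\<exists>c. op a p = Some c \<and> c \<in> A)"
    by blast
  then show "\<exists>a\<in>sigmaS op W. \<exists>G. finite G \<and> G \<noteq> {} \<and>
      (\<forall>f\<in>F. \<exists>p. pprod op G (\<lambda>k. the (pprod op (H k) f)) = Some p \<and>
                p \<in> sigmaS op (Wmul op W a) \<and> (\<exists>c. op a p = Some c \<and> c \<in> A))"
    unfolding blocks_def by auto
qed

end
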